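(* Let $\mathcal G$ be a good pseudogroup on a compact metric space $X$, $\mathcal G_1$ a good generating set and $\mathcal G_2$ the compacted generating set. Then there exists $\rho>0$ such that for all $x_0,y_0\in X$: if $y_0\in\Phi^1_{\rho/2}(x_0)$, then $\Phi^1_{\rho/2}(x_0)\subset\Phi^2_\rho(y_0)$.
   Context: $\mathrm{Homeo}(X)$: homeomorphisms $g:D_g\to R_g$ between open subsets of $X$, composed on natural domains $D_{h\circ g}=g^{-1}(D_h)$. A pseudogroup is a subset of $\mathrm{Homeo}(X)$ containing $\mathrm{id}_X$, closed under composition, inversion, restriction to open subsets, and gluing along open covers of the domain. $\Gamma$ generates $\mathcal G$ if $\bigcup_{g\in\Gamma}(D_g\cup R_g)=X$ and $\mathcal G$ is exactly the set of $g\in\mathrm{Homeo}(X)$ locally equal near each point of $D_g$ to a finite composition of elements of $\Gamma$ and their inverses. A finite generating set is symmetric if it contains $\mathrm{id}_X$ and is closed under inverses; a finite symmetric generating set $\mathcal G_1$ is good if for each $g\in\mathcal G_1$ there is a compact $K_g\subset D_g$ with $\mathcal G_2=\{g|_{\mathrm{int}(K_g)}:g\in\mathcal G_1\}$ still generating $\mathcal G$ ($\mathcal G_2$ is the compacted generating set; $\mathcal G$ is good if it has a good generating set). For $i=1,2$: $\mathcal G^i_n=\{h_1\circ\cdots\circ h_n:h_j\in\mathcal G_i\}$, $\mathcal G^{i,x}_n=\{g\in\mathcal G^i_n:x\in D_g\}$, $\Phi^i_\delta(x)=\{y\in X: d(g(x),g(y))\le\delta\ \forall n\in\mathbb N,\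 \forall g\in\mathcal G^{i,x}_n\cap\mathcal G^{i,y}_n\}$. *)

theory Defs
  imports "HOL-Analysis.Analysis"
begin

text \<open>Partial maps of the ambient type (the compact metric space X is the whole type).
  A partial homeomorphism g : D_g -> R_g is a map with dom = D_g, ran = R_g.
  Composition on natural domains is map composition.\<close>

definition phomeo :: "('a::topological_space \<rightharpoonup> 'a) \<Rightarrow> bool" where
  "phomeo f \<longleftrightarrow> open (dom f) \<and> open (ran f) \<and>
     (\<exists>g. homeomorphism (dom f) (ran f) (\<lambda>x. the (f x)) g)"

definition pinv :: "('a \<rightharpoonup> 'a) \<Rightarrow> ('a \<rightharpoonup> 'a)" where
  "pinv f = (\<lambda>y. if y \<in> ran f then Some (THE x. f x = Some y) else None)"

definition pcomp :: "('a \<rightharpoonup> 'a) list \<Rightarrow> ('a \<rightharpoonup> 'a)" where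
  "pcomp hs = foldr (\<lambda>h acc. h \<circ>\<^sub>m acc) hs Some"

definition pseudogroup :: "('a::topological_space \<rightharpoonup> 'a) set \<Rightarrow> bool" where
  "pseudogroup G \<longleftrightarrow> G \<subseteq> {f. phomeo f} \<and> Some \<in> G
     \<and> (\<forall>g\<in>G. \<forall>h\<in>G. h \<circ>\<^sub>m g \<in> G)
     \<and> (\<forall>g\<in>G. pinv g \<in> G)
     \<and> (\<forall>g\<in>G. \<forall>U. open U \<longrightarrow> g |` U \<in> G)
     \<and> (\<forall>f. phomeo f \<longrightarrow>
           (\<forall>x\<in>dom f. \<exists>U. open U \<and> x \<in> U \<and> f |` U \<in> G) \<longrightarrow> f \<in> G)"

definition generates :: "('a::topological_space \<rightharpoonup> 'a) set \<Rightarrow> ('a \<rightharpoonup> 'a) set \<Rightarrow> bool" where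
  "generates \<Gamma> G \<longleftrightarrow> \<Gamma> \<subseteq> {f. phomeo f}
     \<and> (\<Union>g\<in>\<Gamma>. dom g \<union> ran g) = UNIV
     \<and> G = {g. phomeo g \<and> (\<forall>x\<in>dom g. \<exists>ws U. set ws \<subseteq> \<Gamma> \<union> pinv ` \<Gamma> \<and>
                 open U \<and> x \<in> U \<and> U \<subseteq> dom g \<and> (\<forall>y\<in>U. g y = pcomp ws y))}"

definition symmetric_gen :: "('a \<rightharpoonup> 'a) set \<Rightarrow> bool" where
  "symmetric_gen \<Gamma> \<longleftrightarrow> finite \<Gamma> \<and> Some \<in> \<Gamma> \<and> (\<forall>g\<in>\<Gamma>. pinv g \<in> \<Gamma>)"

definition Gn :: "('a \<rightharpoonup> 'a) set \<Rightarrow> nat \<Rightarrow> ('a \<rightharpoonup> 'a) set" where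
  "Gn \<Gamma> n = {pcomp hs | hs. length hs = n \<and> set hs \<subseteq> \<Gamma>}"

definition Phi :: "('a::metric_space \<rightharpoonup> 'a) set \<Rightarrow> real \<Rightarrow> 'a \<Rightarrow> 'a set" where
  "Phi \<Gamma> \<delta> x = {y. \<forall>n. \<forall>g\<in>Gn \<Gamma> n. x \<in> dom g \<longrightarrow> y \<in> dom g \<longrightarrow>
                        dist (the (g x)) (the (g y)) \<le> \<delta>}"

end

theory Submission
  imports Defs
begin

text \<open>If y stays \<open>r\<close>-close to x under every composition of generators, and each generator
  is defined on the \<open>r\<close>-neighbourhood of the set \<open>U h\<close> it is shrunk to, then any composition
  of shrunk generators defined at y is (unshrunk) defined at x, inductively along the word.
  Two points of \<open>\<Phi>\<^sub>r(x)\<close> are then at distance at most \<open>2r\<close> after every such composition by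
  the triangle inequality through the image of x. The margin \<open>r\<close> exists because there are
  finitely many compact sets \<open>K h\<close> inside the open domains.\<close>

lemma pcomp_Nil [simp]: "pcomp [] = Some"
  by (simp add: pcomp_def)

lemma pcomp_Cons [simp]: "pcomp (h # hs) = h \<circ>\<^sub>m pcomp hs"
  by (simp add: pcomp_def)

lemma pcomp_in_Gn: "set hs \<subseteq> \<Gamma> \<Longrightarrow> pcomp hs \<in> Gn \<Gamma> (length hs)"
  unfolding Gn_def by blast

lemma Phi_pcompD:
  assumes "y \<in> Phi \<Gamma> \<delta> x" "set hs \<subseteq> \<Gamma>" "pcomp hs x = Some a" "pcomp hs y = Some b"
  shows "dist a b \<le> \<delta>"
proof -
  from assms(1) have "\<forall>g\<in>Gn \<Gamma> (length hs). x \<in> dom g \<longrightarrow> y \<in> dom g \<longrightarrow>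
      dist (the (g x)) (the (g y)) \<le> \<delta>"
    unfolding Phi_def by blast
  from this[rule_format, OF pcomp_in_Gn[OF assms(2)]] assms(3,4) show ?thesis
    by auto
qed

lemma Gn_imageE:
  assumes "g \<in> Gn (f ` \<Gamma>) n"
  obtains hs where "set hs \<subseteq> \<Gamma>" "length hs = n" "g = pcomp (map f hs)"
proof -
  obtain fs where "g = pcomp fs" "length fs = n" "fs \<in> lists (f ` \<Gamma>)"
    using assms unfolding Gn_def by auto
  then obtain hs where "hs \<in> lists \<Gamma>" "fs = map f hs"
    unfolding lists_image by blast
  with \<open>g = pcomp fs\<close> \<open>length fs = n\<close> show ?thesis
    using that by auto
qed

lemma pcomp_restrict_Some:
  "pcomp (map (\<lambda>g. g |` U g) hs) y = Some u \<Longrightarrow> pcomp hs y = Some u"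
proof (induction hs arbitrary: u)
  case Nil
  then show ?case by simp
next
  case (Cons h hs)
  then obtain w where "pcomp (map (\<lambda>g. g |` U g) hs) y = Some w" "(h |` U h) w = Some u"
    by (auto simp: map_comp_Some_iff)
  with Cons.IH show ?case
    by (auto simp: restrict_map_def split: if_splits)
qed

lemma finite_compact_subset_open_uniform_cball:
  fixes A B :: "'i \<Rightarrow> 'a::metric_space set"
  assumes "finite I" "\<forall>i\<in>I. compact (A i) \<and> open (B i) \<and> A i \<subseteq> B i"
  shows "\<exists>\<epsilon>>0. \<forall>i\<in>I. \<forall>x\<in>A i. cball x \<epsilon> \<subseteq> B i"
  using assms
proof (induction I rule: finite_induct)
  case empty
  show ?case by (intro exI[of _ 1]) simp
next
  case (insert j I)
  then obtain \<epsilon> where \<epsilon>: "\<epsilon> > 0" "\<forall>i\<in>I. \<forall>x\<in>A i. cball x \<epsilon> \<subseteq> B i"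
    by auto
  obtain \<delta> where \<delta>: "\<delta> > 0" "(\<Union>x\<in>A j. cball x \<delta>) \<subseteq> B j"
    using compact_subset_open_imp_cball_epsilon_subset insert.prems by blast
  have "cball x (min \<epsilon> \<delta>) \<subseteq> cball x \<epsilon>" "cball x (min \<epsilon> \<delta>) \<subseteq> cball x \<delta>" for x :: 'a
    by (simp_all add: subset_cball)
  with \<epsilon>(2) \<delta>(2) have "\<forall>i\<in>insert j I. \<forall>x\<in>A i. cball x (min \<epsilon> \<delta>) \<subseteq> B i"
    by blast
  with \<epsilon>(1) \<delta>(1) show ?case
    by (intro exI[of _ "min \<epsilon> \<delta>"]) simp
qed

lemma Phi_dom_pcomp_restrict:
  fixes x y :: "'a::metric_space"
  assumes margin: "\<forall>h\<in>\<Gamma>. \<forall>k\<in>U h. cball k r \<subseteq> dom h"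
    and y: "y \<in> Phi \<Gamma> r x"
    and hs: "set hs \<subseteq> \<Gamma>" "y \<in> dom (pcomp (map (\<lambda>g. g |` U g) hs))"
  shows "x \<in> dom (pcomp hs)"
  using hs
proof (induction hs)
  case Nil
  then show ?case by simp
next
  case (Cons h hs)
  then have h: "h \<in> \<Gamma>" and hs: "set hs \<subseteq> \<Gamma>"
    by simp_all
  from Cons.prems(2) obtain w u where w: "pcomp (map (\<lambda>g. g |` U g) hs) y = Some w"
    and "(h |` U h) w = Some u"
    by (auto simp: map_comp_Some_iff)
  then have wU: "w \<in> U h"
    by (auto simp: restrict_map_def split: if_splits)
  have "x \<in> dom (pcomp hs)"
    using Cons.IH[OF hs] w by auto
  then obtain v where v: "pcomp hs x = Some v"
    by auto
  have "dist v w \<le> r"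
    using Phi_pcompD[OF y hs v pcomp_restrict_Some[OF w]] .
  then have "v \<in> cball w r"
    by (simp add: dist_commute)
  then have "v \<in> dom h"
    using margin h wU by blast
  with v show ?case
    by (auto simp: map_comp_def)
qed

lemma Phi_subset_Phi_restrict:
  fixes x y :: "'a::metric_space"
  assumes margin: "\<forall>h\<in>\<Gamma>. \<forall>k\<in>U h. cball k r \<subseteq> dom h"
    and y: "y \<in> Phi \<Gamma> r x"
  shows "Phi \<Gamma> r x \<subseteq> Phi ((\<lambda>g. g |` U g) ` \<Gamma>) (2 * r) y"
  unfolding Phi_def [of "(\<lambda>g. g |` U g) ` \<Gamma>"]
proof (intro subsetI CollectI allI ballI impI)
  fix z n g
  assume z: "z \<in> Phi \<Gamma> r x" and g: "g \<in> Gn ((\<lambda>g. g |` U g) ` \<Gamma>) n"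
    and gy: "y \<in> dom g" and gz: "z \<in> dom g"
  obtain hs where hs: "set hs \<subseteq> \<Gamma>" "g = pcomp (map (\<lambda>g. g |` U g) hs)"
    using g by (rule Gn_imageE)
  obtain a b where a: "g y = Some a" and b: "g z = Some b"
    using gy gz by auto
  obtain c where c: "pcomp hs x = Some c"
    using Phi_dom_pcomp_restrict[OF margin y hs(1)] gy by (auto simp: hs(2))
  have "pcomp hs y = Some a" "pcomp hs z = Some b"
    using a b hs(2) pcomp_restrict_Some by metis+
  then have "dist c a \<le> r" "dist c b \<le> r"
    using Phi_pcompD[OF y hs(1) c] Phi_pcompD[OF z hs(1) c] by simp_all
  then have "dist a b \<le> 2 * r"
    using dist_triangle3[of a b c] by linarith
  with a b show "dist (the (g y)) (the (g z)) \<le> 2 * r"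
    by simp
qed

theorem mainTheorem8:
  fixes G G1 :: "('a::metric_space \<rightharpoonup> 'a) set"
    and K :: "('a \<rightharpoonup> 'a) \<Rightarrow> 'a set"
  assumes "compact (UNIV :: 'a set)"
    and "pseudogroup G"
    and "symmetric_gen G1"
    and "generates G1 G"
    and "\<forall>g\<in>G1. compact (K g) \<and> K g \<subseteq> dom g"
    and "generates ((\<lambda>g. g |` interior (K g)) ` G1) G"
  shows "\<exists>\<rho>>0. \<forall>x0 y0. y0 \<in> Phi G1 (\<rho>/2) x0 \<longrightarrow>
           Phi G1 (\<rho>/2) x0 \<subseteq> Phi ((\<lambda>g. g |` interior (K g)) ` G1) \<rho> y0"
proof -
  have "finite G1"
    using assms(3) unfolding symmetric_gen_def by simp
  moreover have "\<forall>g\<in>G1. open (dom g)"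
    using assms(4) unfolding generates_def phomeo_def by auto
  ultimately obtain r where r: "r > 0" "\<forall>g\<in>G1. \<forall>k\<in>K g. cball k r \<subseteq> dom g"
    using finite_compact_subset_open_uniform_cball[of G1 K dom] assms(5) by auto
  then have "\<forall>g\<in>G1. \<forall>k\<in>interior (K g). cball k r \<subseteq> dom g"
    using interior_subset by blast
  then have "\<And>x0 y0. y0 \<in> Phi G1 r x0 \<Longrightarrow>
      Phi G1 r x0 \<subseteq> Phi ((\<lambda>g. g |` interior (K g)) ` G1) (2 * r) y0"
    by (rule Phi_subset_Phi_restrict)
  with r(1) show ?thesis
    by (intro exI[of _ "2 * r"]) simp
qed

end
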